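(* Let $d\ge1$, let $\pi_0,\pi_1,\dots$ be probability densities on $\mathbb{R}^d$, and for $t\ge1$ let $T_t$ be a Markov kernel on $\mathbb{R}^d$ with $\pi_t$ stationary, $m_t\ge1$ an integer and $Q_t=T_t^{m_t}$. Assume there exist a measurable $V:\mathbb{R}^d\to[1,\infty)$, a constant $C>0$ and $\rho_t\in(0,1)$ such that $\int V^2\pi_t\le C$ for all $t\ge0$ and $$\|T_t(x,\cdot)-\pi_t\|_V\le V(x)\rho_t\quad\text{for all }x\in\mathbb{R}^d,\ t\ge1 .$$ Let $\epsilon_t=\rho_t^{m_t}$ and $\alpha_t=2\sqrt{C}\,d_H(\pi_t,\pi_{t-1})$. Then for every $t\ge1$, $$\|Q_t\circ\cdots\circ Q_1\circ\pi_0-\pi_t\|_1\le\sum_{s=1}^t\Big\{\prod_{u=s}^t\epsilon_u\Big\}\alpha_s .$$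
   Context: $\|\mu\|_V=\sup_{|f|\le V}|\int f\,d\mu|$ for a signed measure $\mu$; $\|\cdot\|_1$ is the $L_1$ (total variation) norm. The Hellinger distance is $d_H(p,q)=\big(\int(\sqrt{p(x)}-\sqrt{q(x)})^2dx\big)^{1/2}$. $T^m$ is the $m$-step kernel and $K\circ p$ denotes the law $A\mapsto\int p(z)K(z,A)\,dz$; $Q_t\circ\cdots\circ Q_1\circ\pi_0$ is the law after running $m_s$ steps of $T_s$ in stages $s=1,\dots,t$ starting from $\pi_0$. *)

theory Defs
  imports "HOL-Probability.Probability"
begin

definition vnorm :: "('a \<Rightarrow> real) \<Rightarrow> 'a measure \<Rightarrow> 'a measure \<Rightarrow> ereal" where
  "vnorm V \<mu> \<nu> =
     (SUP f \<in> {f \<in> borel_measurable \<mu>. \<forall>x\<in>space \<mu>. \<bar>f x\<bar> \<le> V x}.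
        (if integrable \<mu> f \<and> integrable \<nu> f
         then ereal \<bar>(\<integral>x. f x \<partial>\<mu>) - (\<integral>x. f x \<partial>\<nu>)\<bar> else \<infinity>))"

definition tvnorm :: "'a measure \<Rightarrow> 'a measure \<Rightarrow> ereal" where
  "tvnorm \<mu> \<nu> = vnorm (\<lambda>_. 1) \<mu> \<nu>"

definition hellinger :: "('a::euclidean_space \<Rightarrow> real) \<Rightarrow> ('a \<Rightarrow> real) \<Rightarrow> real" where
  "hellinger p q = sqrt (\<integral>x. (sqrt (p x) - sqrt (q x))\<^sup>2 \<partial>lborel)"

primrec kpow :: "('a::topological_space \<Rightarrow> 'a measure) \<Rightarrow> nat \<Rightarrow> 'a \<Rightarrow> 'a measure" where
  "kpow K 0 = (\<lambda>x. return borel x)"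
| "kpow K (Suc n) = (\<lambda>x. bind (kpow K n x) K)"

primrec law :: "(nat \<Rightarrow> 'a::euclidean_space \<Rightarrow> real) \<Rightarrow> (nat \<Rightarrow> 'a \<Rightarrow> 'a measure)
                  \<Rightarrow> (nat \<Rightarrow> nat) \<Rightarrow> nat \<Rightarrow> 'a measure" where
  "law \<pi> T m 0 = density lborel (\<pi> 0)"
| "law \<pi> T m (Suc t) = bind (law \<pi> T m t) (kpow (T (Suc t)) (m (Suc t)))"

end

theory Submission
  imports Defs
begin

(*
  The argument works with the real-valued relation
  vbound V S mu nu B: every measurable f with |f| <= V is integrable under mu and
  nu and |int f dmu - int f dnu| <= B.  Such bounds
    (1) compose by the triangle inequality,
    (2) contract by the factor rho under one step of a kernel K that leaves P
        invariant and satisfies the drift bound vbound V (K x) P (rho * V x);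
        iterating, m steps contract by rho^m,
    (3) hold between two densities p, q with V-moments bounded by C, with
        B = 2 sqrt C d_H(p,q), by a pointwise AM-GM estimate optimised over its
        free weight.
  For the law after stage t this gives the recursion
  e_t = rho_t^m_t (e_(t-1) + alpha_t), whose solution is the stated sum; finally
  V >= 1 turns the V-bound into a total variation bound.
*)

lemma integral_bind_nonneg:
  fixes g :: "'b \<Rightarrow> real"
  assumes K: "K \<in> S \<rightarrow>\<^sub>M prob_algebra N" and \<mu>: "\<mu> \<in> space (prob_algebra S)"
    and g[measurable]: "g \<in> borel_measurable N"
    and g_nonneg: "\<And>y. y \<in> space N \<Longrightarrow> 0 \<le> g y"
    and gK: "\<And>x. x \<in> space S \<Longrightarrow> integrable (K x) g"
    and g\<mu>: "integrable \<mu> (\<lambda>x. \<integral>y. g y \<partial>K x)"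
  shows "integrable (\<mu> \<bind> K) g \<and> (\<integral>y. g y \<partial>(\<mu> \<bind> K)) = (\<integral>x. (\<integral>y. g y \<partial>K x) \<partial>\<mu>)"
proof -
  have sets_\<mu>: "sets \<mu> = sets S" and space_\<mu>: "space \<mu> = space S"
    using \<mu> by (auto simp: space_prob_algebra dest: sets_eq_imp_space_eq)
  have space_K: "x \<in> space S \<Longrightarrow> space (K x) = space N" for x
    using measurable_space[OF K] by (auto simp: space_prob_algebra dest: sets_eq_imp_space_eq)
  have K': "K \<in> \<mu> \<rightarrow>\<^sub>M subprob_algebra N"
    using measurable_prob_algebraD[OF K] sets_\<mu> by (simp cong: measurable_cong_sets)
  have "(\<integral>\<^sup>+y. g y \<partial>(\<mu> \<bind> K)) = (\<integral>\<^sup>+x. (\<integral>\<^sup>+y. g y \<partial>K x) \<partial>\<mu>)"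
    by (rule nn_integral_bind[OF _ K']) simp
  also have "\<dots> = (\<integral>\<^sup>+x. ennreal (\<integral>y. g y \<partial>K x) \<partial>\<mu>)"
    using gK g_nonneg space_K space_\<mu>
    by (intro nn_integral_cong nn_integral_eq_integral AE_I2) auto
  also have "\<dots> = ennreal (\<integral>x. (\<integral>y. g y \<partial>K x) \<partial>\<mu>)"
    using g\<mu> g_nonneg space_K space_\<mu>
    by (intro nn_integral_eq_integral AE_I2 integral_nonneg_AE) auto
  finally have nn: "(\<integral>\<^sup>+y. g y \<partial>(\<mu> \<bind> K)) = ennreal (\<integral>x. (\<integral>y. g y \<partial>K x) \<partial>\<mu>)" .
  have sets_bind: "sets (\<mu> \<bind> K) = sets N"
    using sets_bind'[OF \<mu> K] .
  show ?thesis
  proof (rule nn_integral_eq_integrable[THEN iffD1, OF _ _ _ nn])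
    show "g \<in> borel_measurable (\<mu> \<bind> K)" using sets_bind by (simp cong: measurable_cong_sets)
    show "AE y in \<mu> \<bind> K. 0 \<le> g y"
      using sets_eq_imp_space_eq[OF sets_bind] g_nonneg by (intro AE_I2) auto
    show "0 \<le> (\<integral>x. (\<integral>y. g y \<partial>K x) \<partial>\<mu>)"
      using g_nonneg space_K space_\<mu> by (intro integral_nonneg_AE AE_I2) auto
  qed
qed

lemma integral_bind_bounded:
  fixes g V :: "'b \<Rightarrow> real"
  assumes K: "K \<in> S \<rightarrow>\<^sub>M prob_algebra N" and \<mu>: "\<mu> \<in> space (prob_algebra S)"
    and VK: "\<And>x. x \<in> space S \<Longrightarrow> integrable (K x) V"
    and V\<mu>: "integrable \<mu> (\<lambda>x. \<integral>y. V y \<partial>K x)"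
    and g[measurable]: "g \<in> borel_measurable N"
    and g_nonneg: "\<And>y. y \<in> space N \<Longrightarrow> 0 \<le> g y" and gV: "\<And>y. y \<in> space N \<Longrightarrow> g y \<le> V y"
  shows "(\<forall>x\<in>space S. integrable (K x) g) \<and> integrable \<mu> (\<lambda>x. \<integral>y. g y \<partial>K x)
      \<and> integrable (\<mu> \<bind> K) g \<and> (\<integral>y. g y \<partial>(\<mu> \<bind> K)) = (\<integral>x. (\<integral>y. g y \<partial>K x) \<partial>\<mu>)"
proof -
  have sets_\<mu>: "sets \<mu> = sets S" and space_\<mu>: "space \<mu> = space S"
    using \<mu> by (auto simp: space_prob_algebra dest: sets_eq_imp_space_eq)
  have space_K: "x \<in> space S \<Longrightarrow> space (K x) = space N" for x
    using measurable_space[OF K] by (auto simp: space_prob_algebra dest: sets_eq_imp_space_eq)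
  have sets_K: "x \<in> space S \<Longrightarrow> sets (K x) = sets N" for x
    using measurable_space[OF K] by (auto simp: space_prob_algebra)
  have gK: "integrable (K x) g" if x: "x \<in> space S" for x
    using VK[OF x] g_nonneg gV space_K[OF x] sets_K[OF x]
    by (intro Bochner_Integration.integrable_bound[OF VK[OF x]] AE_I2)
       (auto cong: measurable_cong_sets intro: order_trans[OF _ abs_ge_self])
  have "(\<lambda>x. \<integral>y. g y \<partial>K x) \<in> borel_measurable S"
    by (rule measurable_compose[OF measurable_prob_algebraD[OF K] integral_measurable_subprob_algebra[OF g]])
  then have meas: "(\<lambda>x. \<integral>y. g y \<partial>K x) \<in> borel_measurable \<mu>"
    using sets_\<mu> by (simp cong: measurable_cong_sets)
  have "norm (\<integral>y. g y \<partial>K x) \<le> norm (\<integral>y. V y \<partial>K x)" if x: "x \<in> space S" for x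
  proof -
    have "0 \<le> (\<integral>y. g y \<partial>K x)"
      using g_nonneg space_K[OF x] by (intro integral_nonneg_AE AE_I2) auto
    moreover have "(\<integral>y. g y \<partial>K x) \<le> (\<integral>y. V y \<partial>K x)"
      using gV space_K[OF x] by (intro integral_mono[OF gK[OF x] VK[OF x]]) auto
    ultimately show ?thesis by simp
  qed
  then have g\<mu>: "integrable \<mu> (\<lambda>x. \<integral>y. g y \<partial>K x)"
    using space_\<mu> by (intro Bochner_Integration.integrable_bound[OF V\<mu> meas] AE_I2) auto
  show ?thesis
    using integral_bind_nonneg[OF K \<mu> g g_nonneg gK g\<mu>] gK g\<mu> by blast
qed

lemma integral_bind_dominated:
  fixes f V :: "'b \<Rightarrow> real"
  assumes K: "K \<in> S \<rightarrow>\<^sub>M prob_algebra N" and \<mu>: "\<mu> \<in> space (prob_algebra S)"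
    and VK: "\<And>x. x \<in> space S \<Longrightarrow> integrable (K x) V"
    and V\<mu>: "integrable \<mu> (\<lambda>x. \<integral>y. V y \<partial>K x)"
    and f[measurable]: "f \<in> borel_measurable N" and fV: "\<And>y. y \<in> space N \<Longrightarrow> \<bar>f y\<bar> \<le> V y"
  shows "integrable (\<mu> \<bind> K) f \<and> (\<integral>y. f y \<partial>(\<mu> \<bind> K)) = (\<integral>x. (\<integral>y. f y \<partial>K x) \<partial>\<mu>)"
proof -
  note part = integral_bind_bounded[OF K \<mu> VK V\<mu>]
  have pos: "(\<forall>x\<in>space S. integrable (K x) (\<lambda>y. max (f y) 0)) \<and> integrable \<mu> (\<lambda>x. \<integral>y. max (f y) 0 \<partial>K x)
      \<and> integrable (\<mu> \<bind> K) (\<lambda>y. max (f y) 0)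
      \<and> (\<integral>y. max (f y) 0 \<partial>(\<mu> \<bind> K)) = (\<integral>x. (\<integral>y. max (f y) 0 \<partial>K x) \<partial>\<mu>)"
    using fV by (intro part) (fastforce simp: abs_le_iff)+
  have neg: "(\<forall>x\<in>space S. integrable (K x) (\<lambda>y. max (- f y) 0)) \<and> integrable \<mu> (\<lambda>x. \<integral>y. max (- f y) 0 \<partial>K x)
      \<and> integrable (\<mu> \<bind> K) (\<lambda>y. max (- f y) 0)
      \<and> (\<integral>y. max (- f y) 0 \<partial>(\<mu> \<bind> K)) = (\<integral>x. (\<integral>y. max (- f y) 0 \<partial>K x) \<partial>\<mu>)"
    using fV by (intro part) (fastforce simp: abs_le_iff)+
  have space_\<mu>: "space \<mu> = space S"
    using \<mu> by (auto simp: space_prob_algebra dest: sets_eq_imp_space_eq)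
  have split: "f = (\<lambda>y. max (f y) 0 - max (- f y) 0)" by (auto simp: fun_eq_iff)
  have "integrable (\<mu> \<bind> K) f" using pos neg by (subst split) auto
  moreover have "(\<integral>y. f y \<partial>(\<mu> \<bind> K)) = (\<integral>x. (\<integral>y. f y \<partial>K x) \<partial>\<mu>)"
  proof -
    have "(\<integral>y. f y \<partial>(\<mu> \<bind> K))
        = (\<integral>x. (\<integral>y. max (f y) 0 \<partial>K x) - (\<integral>y. max (- f y) 0 \<partial>K x) \<partial>\<mu>)"
      using pos neg by (subst split) simp
    also have "\<dots> = (\<integral>x. (\<integral>y. f y \<partial>K x) \<partial>\<mu>)"
      using pos neg space_\<mu> by (intro Bochner_Integration.integral_cong refl) (subst (3) split, simp)
    finally show ?thesis .
  qed
  ultimately show ?thesis ..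
qed

definition vbound :: "('a \<Rightarrow> real) \<Rightarrow> 'a measure \<Rightarrow> 'a measure \<Rightarrow> 'a measure \<Rightarrow> real \<Rightarrow> bool" where
  "vbound V S \<mu> \<nu> B \<longleftrightarrow> (\<forall>f \<in> borel_measurable S. (\<forall>x\<in>space S. \<bar>f x\<bar> \<le> V x) \<longrightarrow>
     integrable \<mu> f \<and> integrable \<nu> f \<and> \<bar>(\<integral>x. f x \<partial>\<mu>) - (\<integral>x. f x \<partial>\<nu>)\<bar> \<le> B)"

lemma vboundD:
  assumes "vbound V S \<mu> \<nu> B" "f \<in> borel_measurable S" "\<And>x. x \<in> space S \<Longrightarrow> \<bar>f x\<bar> \<le> V x"
  shows "integrable \<mu> f" "integrable \<nu> f" "\<bar>(\<integral>x. f x \<partial>\<mu>) - (\<integral>x. f x \<partial>\<nu>)\<bar> \<le> B"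
  using assms unfolding vbound_def by auto

lemma vbound_trans:
  assumes \<mu>\<nu>: "vbound V S \<mu> \<nu> B" and \<nu>\<xi>: "vbound V S \<nu> \<xi> A"
  shows "vbound V S \<mu> \<xi> (B + A)"
  unfolding vbound_def
proof (intro ballI impI conjI)
  fix f assume f: "f \<in> borel_measurable S" and "\<forall>x\<in>space S. \<bar>f x\<bar> \<le> V x"
  then have fV: "\<And>x. x \<in> space S \<Longrightarrow> \<bar>f x\<bar> \<le> V x" by blast
  show "integrable \<mu> f" using vboundD(1)[OF \<mu>\<nu> f fV] .
  show "integrable \<xi> f" using vboundD(2)[OF \<nu>\<xi> f fV] .
  show "\<bar>(\<integral>x. f x \<partial>\<mu>) - (\<integral>x. f x \<partial>\<xi>)\<bar> \<le> B + A"
    using vboundD(3)[OF \<mu>\<nu> f fV] vboundD(3)[OF \<nu>\<xi> f fV] by arith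
qed

lemma vbound_of_vnorm:
  assumes sets_\<mu>: "sets \<mu> = sets S" and "vnorm V \<mu> \<nu> \<le> ereal B"
  shows "vbound V S \<mu> \<nu> B"
  unfolding vbound_def
proof (intro ballI impI)
  fix f assume f: "f \<in> borel_measurable S" and fV: "\<forall>x\<in>space S. \<bar>f x\<bar> \<le> V x"
  have "f \<in> borel_measurable \<mu>" "\<forall>x\<in>space \<mu>. \<bar>f x\<bar> \<le> V x"
    using f fV sets_\<mu> sets_eq_imp_space_eq[OF sets_\<mu>] by (auto cong: measurable_cong_sets)
  then have "(if integrable \<mu> f \<and> integrable \<nu> f
      then ereal \<bar>(\<integral>x. f x \<partial>\<mu>) - (\<integral>x. f x \<partial>\<nu>)\<bar> else \<infinity>) \<le> vnorm V \<mu> \<nu>"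
    unfolding vnorm_def by (intro SUP_upper) auto
  also note \<open>vnorm V \<mu> \<nu> \<le> ereal B\<close>
  finally show "integrable \<mu> f \<and> integrable \<nu> f \<and> \<bar>(\<integral>x. f x \<partial>\<mu>) - (\<integral>x. f x \<partial>\<nu>)\<bar> \<le> B"
    by (auto split: if_splits)
qed

(* For V >= 1 every function bounded by 1 is a test function, so a V-bound
   also bounds the total variation norm. *)
lemma tvnorm_of_vbound:
  fixes V :: "'a \<Rightarrow> real"
  assumes sets_\<mu>: "sets \<mu> = sets S" and V_ge1: "\<And>x. x \<in> space S \<Longrightarrow> 1 \<le> V x"
    and "vbound V S \<mu> \<nu> B"
  shows "tvnorm \<mu> \<nu> \<le> ereal B"
  unfolding tvnorm_def vnorm_def
proof (rule SUP_least)
  fix f :: "'a \<Rightarrow> real"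
  assume "f \<in> {f \<in> borel_measurable \<mu>. \<forall>x\<in>space \<mu>. \<bar>f x\<bar> \<le> 1}"
  then have "f \<in> borel_measurable S" and f_le1: "\<forall>x\<in>space S. \<bar>f x\<bar> \<le> 1"
    using sets_\<mu> sets_eq_imp_space_eq[OF sets_\<mu>] by (auto cong: measurable_cong_sets)
  moreover have "\<And>x. x \<in> space S \<Longrightarrow> \<bar>f x\<bar> \<le> V x"
    using f_le1 V_ge1 by (meson order_trans)
  ultimately have "integrable \<mu> f" "integrable \<nu> f" "\<bar>(\<integral>x. f x \<partial>\<mu>) - (\<integral>x. f x \<partial>\<nu>)\<bar> \<le> B"
    using vboundD[OF \<open>vbound V S \<mu> \<nu> B\<close>] by blast+
  then
  show "(if integrable \<mu> f \<and> integrable \<nu> f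
      then ereal \<bar>(\<integral>x. f x \<partial>\<mu>) - (\<integral>x. f x \<partial>\<nu>)\<bar> else \<infinity>) \<le> ereal B"
    by simp
qed

(* Under the drift bound the K-average of V is dominated by |int V dP| + rho V,
   so integrals against mu >>= K disintegrate for every test function. *)
lemma integral_bind_drift:
  fixes V :: "'a \<Rightarrow> real"
  assumes K: "K \<in> S \<rightarrow>\<^sub>M prob_algebra S" and P: "P \<in> space (prob_algebra S)"
    and V[measurable]: "V \<in> borel_measurable S" and V_nonneg: "\<And>x. x \<in> space S \<Longrightarrow> 0 \<le> V x"
    and \<rho>: "0 \<le> \<rho>" and drift: "\<And>x. x \<in> space S \<Longrightarrow> vbound V S (K x) P (\<rho> * V x)"
    and \<mu>: "\<mu> \<in> space (prob_algebra S)" and V\<mu>: "integrable \<mu> V"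
    and f: "f \<in> borel_measurable S" and fV: "\<And>x. x \<in> space S \<Longrightarrow> \<bar>f x\<bar> \<le> V x"
  shows "integrable (\<mu> \<bind> K) f \<and> (\<integral>y. f y \<partial>(\<mu> \<bind> K)) = (\<integral>x. (\<integral>y. f y \<partial>K x) \<partial>\<mu>)"
proof (rule integral_bind_dominated[OF K \<mu> _ _ f fV])
  have V_test: "\<And>x. x \<in> space S \<Longrightarrow> \<bar>V x\<bar> \<le> V x" using V_nonneg by simp
  show VK: "integrable (K x) V" if "x \<in> space S" for x
    using vboundD(1)[OF drift[OF that] V V_test] .
  have sets_\<mu>: "sets \<mu> = sets S" and space_\<mu>: "space \<mu> = space S"
    using \<mu> by (auto simp: space_prob_algebra dest: sets_eq_imp_space_eq)
  have "(\<lambda>x. \<integral>y. V y \<partial>K x) \<in> borel_measurable S"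
    by (rule measurable_compose[OF measurable_prob_algebraD[OF K] integral_measurable_subprob_algebra[OF V]])
  then have meas: "(\<lambda>x. \<integral>y. V y \<partial>K x) \<in> borel_measurable \<mu>"
    using sets_\<mu> by (simp cong: measurable_cong_sets)
  have bound: "norm (\<integral>y. V y \<partial>K x) \<le> norm (\<bar>\<integral>y. V y \<partial>P\<bar> + \<rho> * V x)" if x: "x \<in> space S" for x
    using vboundD(3)[OF drift[OF x] V V_test] \<rho> V_nonneg[OF x] by (simp add: abs_le_iff) linarith
  have dominant: "integrable \<mu> (\<lambda>x. \<bar>\<integral>y. V y \<partial>P\<bar> + \<rho> * V x)"
  proof -
    interpret prob_space \<mu> using \<mu> by (simp add: space_prob_algebra)
    show ?thesis using V\<mu> by simp
  qed
  show "integrable \<mu> (\<lambda>x. \<integral>y. V y \<partial>K x)"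
    by (rule Bochner_Integration.integrable_bound[OF dominant meas])
       (rule AE_I2, use bound space_\<mu> in blast)
qed

lemma vbound_bind_contract:
  fixes V :: "'a \<Rightarrow> real"
  assumes K: "K \<in> S \<rightarrow>\<^sub>M prob_algebra S" and P: "P \<in> space (prob_algebra S)"
    and stationary: "P \<bind> K = P"
    and V[measurable]: "V \<in> borel_measurable S" and V_nonneg: "\<And>x. x \<in> space S \<Longrightarrow> 0 \<le> V x"
    and \<rho>: "0 < \<rho>" and drift: "\<And>x. x \<in> space S \<Longrightarrow> vbound V S (K x) P (\<rho> * V x)"
    and \<mu>: "\<mu> \<in> space (prob_algebra S)" and \<mu>P: "vbound V S \<mu> P B"
  shows "vbound V S (\<mu> \<bind> K) P (\<rho> * B)"
  unfolding vbound_def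
proof (intro ballI impI conjI)
  fix f :: "'a \<Rightarrow> real"
  assume f[measurable]: "f \<in> borel_measurable S" and "\<forall>x\<in>space S. \<bar>f x\<bar> \<le> V x"
  then have fV: "\<And>x. x \<in> space S \<Longrightarrow> \<bar>f x\<bar> \<le> V x" by blast
  have V_test: "\<And>x. x \<in> space S \<Longrightarrow> \<bar>V x\<bar> \<le> V x" using V_nonneg by simp
  have bind_eq: "integrable (M \<bind> K) f \<and> (\<integral>y. f y \<partial>(M \<bind> K)) = (\<integral>x. (\<integral>y. f y \<partial>K x) \<partial>M)"
    if "M \<in> space (prob_algebra S)" "integrable M V" for M
    using integral_bind_drift[OF K P V V_nonneg less_imp_le[OF \<rho>] drift that f fV] .
  have \<mu>K: "integrable (\<mu> \<bind> K) f \<and> (\<integral>y. f y \<partial>(\<mu> \<bind> K)) = (\<integral>x. (\<integral>y. f y \<partial>K x) \<partial>\<mu>)"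
    by (rule bind_eq[OF \<mu> vboundD(1)[OF \<mu>P V V_test]])
  have PK: "(\<integral>y. f y \<partial>P) = (\<integral>x. (\<integral>y. f y \<partial>K x) \<partial>P)"
    using bind_eq[OF P vboundD(2)[OF \<mu>P V V_test]] stationary by simp
  show "integrable (\<mu> \<bind> K) f" using \<mu>K by blast
  show "integrable P f" using vboundD(2)[OF \<mu>P f fV] .
  (* The rescaled one-step deviation h is again a test function by the drift bound. *)
  define c where "c = (\<integral>y. f y \<partial>P)"
  define h where "h x = ((\<integral>y. f y \<partial>K x) - c) / \<rho>" for x
  have h[measurable]: "h \<in> borel_measurable S"
    unfolding h_def
    using measurable_compose[OF measurable_prob_algebraD[OF K] integral_measurable_subprob_algebra[OF f]]
    by measurable
  have hV: "\<bar>h x\<bar> \<le> V x" if x: "x \<in> space S" for x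
    using vboundD(3)[OF drift[OF x] f fV] \<rho> unfolding h_def c_def
    by (simp add: abs_div pos_divide_le_eq mult.commute)
  have Kf_eq: "(\<lambda>x. \<integral>y. f y \<partial>K x) = (\<lambda>x. \<rho> * h x + c)"
    using \<rho> by (auto simp: h_def fun_eq_iff)
  have integral_Kf: "(\<integral>x. (\<integral>y. f y \<partial>K x) \<partial>M) = \<rho> * (\<integral>x. h x \<partial>M) + c"
    if M: "M \<in> space (prob_algebra S)" "integrable M h" for M
  proof -
    interpret prob_space M using M(1) by (simp add: space_prob_algebra)
    show ?thesis unfolding Kf_eq using M(2) by (simp add: prob_space)
  qed
  have bind_f: "(\<integral>y. f y \<partial>(\<mu> \<bind> K)) = \<rho> * (\<integral>x. h x \<partial>\<mu>) + c"
    using \<mu>K integral_Kf[OF \<mu> vboundD(1)[OF \<mu>P h hV]] by simp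
  have "c = \<rho> * (\<integral>x. h x \<partial>P) + c"
    using PK integral_Kf[OF P vboundD(2)[OF \<mu>P h hV]] unfolding c_def[symmetric] by linarith
  then have "\<rho> * (\<integral>x. h x \<partial>P) = 0" by linarith
  with bind_f have "(\<integral>y. f y \<partial>(\<mu> \<bind> K)) - (\<integral>y. f y \<partial>P) = \<rho> * ((\<integral>x. h x \<partial>\<mu>) - (\<integral>x. h x \<partial>P))"
    unfolding c_def[symmetric] by (simp add: right_diff_distrib)
  also have "\<bar>\<dots>\<bar> \<le> \<rho> * B"
    using vboundD(3)[OF \<mu>P h hV] \<rho> by (simp add: abs_mult)
  finally show "\<bar>(\<integral>y. f y \<partial>(\<mu> \<bind> K)) - (\<integral>y. f y \<partial>P)\<bar> \<le> \<rho> * B" .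
qed

lemma bind_in_prob_algebra:
  assumes "\<mu> \<in> space (prob_algebra M)" and "K \<in> M \<rightarrow>\<^sub>M prob_algebra N"
  shows "\<mu> \<bind> K \<in> space (prob_algebra N)"
  using prob_space_bind'[OF assms] sets_bind'[OF assms] by (simp add: space_prob_algebra)

lemma kpow_measurable:
  assumes K: "K \<in> borel \<rightarrow>\<^sub>M prob_algebra borel"
  shows "kpow K n \<in> borel \<rightarrow>\<^sub>M prob_algebra borel"
proof (induction n)
  case 0
  show ?case using measurable_return_prob_space[of borel] by (simp add: comp_def)
next
  case (Suc n)
  show ?case using measurable_bind_prob_space[OF Suc K] by simp
qed

lemma bind_kpow_Suc:
  assumes K: "K \<in> borel \<rightarrow>\<^sub>M prob_algebra borel" and \<mu>: "\<mu> \<in> space (prob_algebra borel)"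
  shows "\<mu> \<bind> kpow K (Suc n) = (\<mu> \<bind> kpow K n) \<bind> K"
proof -
  have "kpow K n \<in> \<mu> \<rightarrow>\<^sub>M subprob_algebra borel"
    using measurable_prob_algebraD[OF kpow_measurable[OF K]] \<mu>
    by (simp add: space_prob_algebra cong: measurable_cong_sets)
  from bind_assoc[OF this measurable_prob_algebraD[OF K]] show ?thesis by simp
qed

lemma vbound_kpow_contract:
  fixes V :: "'a::topological_space \<Rightarrow> real"
  assumes K: "K \<in> borel \<rightarrow>\<^sub>M prob_algebra borel" and P: "P \<in> space (prob_algebra borel)"
    and stationary: "P \<bind> K = P"
    and V: "V \<in> borel_measurable borel" and V_nonneg: "\<And>x. 0 \<le> V x"
    and \<rho>: "0 < \<rho>" and drift: "\<And>x. vbound V borel (K x) P (\<rho> * V x)"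
    and \<mu>: "\<mu> \<in> space (prob_algebra borel)" and \<mu>P: "vbound V borel \<mu> P B"
  shows "vbound V borel (\<mu> \<bind> kpow K n) P (\<rho> ^ n * B)"
proof (induction n)
  case 0
  have "\<mu> \<bind> kpow K 0 = \<mu>"
    using bind_return''[of \<mu> borel] \<mu> by (simp add: space_prob_algebra comp_def)
  then show ?case using \<mu>P by simp
next
  case (Suc n)
  have "\<mu> \<bind> kpow K n \<in> space (prob_algebra borel)"
    using bind_in_prob_algebra[OF \<mu> kpow_measurable[OF K]] .
  from vbound_bind_contract[OF K P stationary V _ \<rho> _ this Suc] V_nonneg drift
  show ?case unfolding bind_kpow_Suc[OF K \<mu>] by (simp add: mult.assoc)
qed

(* Pointwise AM-GM estimate behind the Hellinger bound: with a = sqrt p and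
   b = sqrt q, |f (p - q)| <= l V^2 (p + q) + (sqrt q - sqrt p)^2 / (2 l). *)
lemma abs_mult_diff_squares_le:
  fixes a b f v l :: real
  assumes a: "0 \<le> a" and b: "0 \<le> b" and fv: "\<bar>f\<bar> \<le> v" and l: "0 < l"
  shows "\<bar>f * (a\<^sup>2 - b\<^sup>2)\<bar> \<le> l * (v\<^sup>2 * a\<^sup>2 + v\<^sup>2 * b\<^sup>2) + (b - a)\<^sup>2 / (2 * l)"
proof -
  define X where "X = v * (a + b)"
  define Y where "Y = \<bar>a - b\<bar>"
  have "a\<^sup>2 - b\<^sup>2 = (a + b) * (a - b)"
    by (simp add: power2_eq_square algebra_simps)
  then have "\<bar>f * (a\<^sup>2 - b\<^sup>2)\<bar> = \<bar>f\<bar> * ((a + b) * Y)"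
    using a b by (simp add: Y_def abs_mult)
  also have "\<dots> \<le> X * Y"
    unfolding X_def Y_def mult.assoc using a b fv by (intro mult_right_mono) auto
  also have "\<dots> \<le> l * X\<^sup>2 / 2 + Y\<^sup>2 / (2 * l)"
  proof -
    have "2 * l * (X * Y) \<le> l * (l * X\<^sup>2) + Y\<^sup>2"
      using zero_le_power2[of "l * X - Y"] by (simp add: power2_eq_square algebra_simps)
    then show ?thesis using l by (simp add: field_simps)
  qed
  also have "l * X\<^sup>2 / 2 \<le> l * (v\<^sup>2 * a\<^sup>2 + v\<^sup>2 * b\<^sup>2)"
  proof -
    have "(a + b)\<^sup>2 \<le> 2 * (a\<^sup>2 + b\<^sup>2)"
      using zero_le_power2[of "a - b"] by (simp add: power2_eq_square algebra_simps)
    then have "X\<^sup>2 \<le> v\<^sup>2 * (2 * (a\<^sup>2 + b\<^sup>2))"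
      unfolding X_def power_mult_distrib by (rule mult_left_mono) simp
    then have "l * X\<^sup>2 \<le> l * (v\<^sup>2 * (2 * (a\<^sup>2 + b\<^sup>2)))"
      using l by (intro mult_left_mono) auto
    then show ?thesis by (simp add: algebra_simps)
  qed
  finally show ?thesis by (simp add: Y_def power2_commute)
qed

(* Optimising the free weight l: if D <= 2 l C + H^2 / (2 l) for all l > 0,
   then D <= 2 sqrt C H (choose l = H / (2 sqrt C); H = 0 by letting l -> 0). *)
lemma le_of_tradeoff:
  fixes D H C :: real
  assumes H: "0 \<le> H" and C: "0 < C"
    and tradeoff: "\<And>l. 0 < l \<Longrightarrow> D \<le> 2 * l * C + H\<^sup>2 / (2 * l)"
  shows "D \<le> 2 * sqrt C * H"
proof (cases "H = 0")
  case True
  have "D \<le> 0"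
  proof (rule field_le_epsilon)
    fix e :: real assume "0 < e"
    then show "D \<le> 0 + e" using tradeoff[of "e / (2 * C)"] C True by simp
  qed
  then show ?thesis using True by simp
next
  case False
  define l where "l = H / (2 * sqrt C)"
  have "0 < l" using False H C by (simp add: l_def)
  moreover have "2 * l * C + H\<^sup>2 / (2 * l) = 2 * sqrt C * H"
    using False H C unfolding l_def
    by (simp add: field_simps power2_eq_square flip: real_sqrt_mult)
  ultimately show ?thesis using tradeoff by metis
qed

lemma density_in_prob_algebra:
  fixes p :: "'a::euclidean_space \<Rightarrow> real"
  assumes "p \<in> borel_measurable borel" and "(\<integral>\<^sup>+x. ennreal (p x) \<partial>lborel) = 1"
  shows "density lborel p \<in> space (prob_algebra borel)"
  using assms by (auto simp: space_prob_algebra emeasure_density intro!: prob_spaceI)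

lemma integrable_weighted_density:
  fixes p w :: "'a::euclidean_space \<Rightarrow> real"
  assumes p[measurable]: "p \<in> borel_measurable borel" and p_nonneg: "\<And>x. 0 \<le> p x"
    and w[measurable]: "w \<in> borel_measurable borel" and w_nonneg: "\<And>x. 0 \<le> w x"
    and moment: "(\<integral>\<^sup>+x. ennreal (w x * p x) \<partial>lborel) \<le> ennreal C" and C: "0 \<le> C"
  shows "integrable lborel (\<lambda>x. w x * p x)" "(\<integral>x. w x * p x \<partial>lborel) \<le> C"
proof -
  show int: "integrable lborel (\<lambda>x. w x * p x)"
    using moment p_nonneg w_nonneg by (intro integrableI_nonneg) (auto simp: top.not_eq_extremum intro: le_less_trans)
  have "ennreal (\<integral>x. w x * p x \<partial>lborel) \<le> ennreal C"
    using moment nn_integral_eq_integral[OF int] p_nonneg w_nonneg by simp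
  then show "(\<integral>x. w x * p x \<partial>lborel) \<le> C" using C by simp
qed

(* For V >= 1 the second V-moment dominates every test function, so test functions
   are integrable under the density and their integrals become Lebesgue integrals. *)
lemma integrable_test_density:
  fixes p V f :: "'a::euclidean_space \<Rightarrow> real"
  assumes p[measurable]: "p \<in> borel_measurable borel" and p_nonneg: "\<And>x. 0 \<le> p x"
    and V2p: "integrable lborel (\<lambda>x. (V x)\<^sup>2 * p x)" and V_ge1: "\<And>x. 1 \<le> V x"
    and f[measurable]: "f \<in> borel_measurable borel" and fV: "\<And>x. \<bar>f x\<bar> \<le> V x"
  shows "integrable lborel (\<lambda>x. p x * f x)" "integrable (density lborel p) f"
    "(\<integral>x. f x \<partial>density lborel p) = (\<integral>x. p x * f x \<partial>lborel)"
proof -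
  have "\<bar>f x\<bar> \<le> (V x)\<^sup>2" for x
  proof -
    have "V x * 1 \<le> V x * V x" using V_ge1[of x] by (intro mult_left_mono) auto
    then show ?thesis using fV[of x] by (simp add: power2_eq_square)
  qed
  then have "norm (p x * f x) \<le> norm ((V x)\<^sup>2 * p x)" for x
    using p_nonneg[of x] by (simp add: abs_mult mult_left_mono mult.commute)
  then show int: "integrable lborel (\<lambda>x. p x * f x)"
    by (intro Bochner_Integration.integrable_bound[OF V2p] AE_I2) auto
  show "integrable (density lborel p) f" using int p_nonneg by (simp add: integrable_density)
  show "(\<integral>x. f x \<partial>density lborel p) = (\<integral>x. p x * f x \<partial>lborel)"
    using p_nonneg by (simp add: integral_density)
qed

(* The squared Hellinger distance of two integrable densities is the (finite)
   integral of (sqrt q - sqrt p)^2, which is dominated by p + q. *)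
lemma hellinger_integrand:
  fixes p q :: "'a::euclidean_space \<Rightarrow> real"
  assumes p[measurable]: "p \<in> borel_measurable borel" and q[measurable]: "q \<in> borel_measurable borel"
    and p_nonneg: "\<And>x. 0 \<le> p x" and q_nonneg: "\<And>x. 0 \<le> q x"
    and int_p: "integrable lborel p" and int_q: "integrable lborel q"
  shows "integrable lborel (\<lambda>x. (sqrt (q x) - sqrt (p x))\<^sup>2)"
    "(\<integral>x. (sqrt (q x) - sqrt (p x))\<^sup>2 \<partial>lborel) = (hellinger q p)\<^sup>2"
proof -
  have bound: "(sqrt (q x) - sqrt (p x))\<^sup>2 \<le> p x + q x" for x
    using p_nonneg[of x] q_nonneg[of x] by (simp add: power2_diff)
  show "integrable lborel (\<lambda>x. (sqrt (q x) - sqrt (p x))\<^sup>2)"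
  proof (rule Bochner_Integration.integrable_bound[of _ "\<lambda>x. p x + q x"])
    show "integrable lborel (\<lambda>x. p x + q x)" using int_p int_q by simp
    show "AE x in lborel. norm ((sqrt (q x) - sqrt (p x))\<^sup>2) \<le> norm (p x + q x)"
      using bound p_nonneg q_nonneg by (intro AE_I2) simp
  qed simp
  have "0 \<le> (\<integral>x. (sqrt (q x) - sqrt (p x))\<^sup>2 \<partial>lborel)" by simp
  then show "(\<integral>x. (sqrt (q x) - sqrt (p x))\<^sup>2 \<partial>lborel) = (hellinger q p)\<^sup>2"
    unfolding hellinger_def by simp
qed

lemma vbound_density_hellinger:
  fixes p q V :: "'a::euclidean_space \<Rightarrow> real"
  assumes p[measurable]: "p \<in> borel_measurable borel" and p_nonneg: "\<And>x. 0 \<le> p x"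
    and p_norm: "(\<integral>\<^sup>+x. ennreal (p x) \<partial>lborel) = 1"
    and q[measurable]: "q \<in> borel_measurable borel" and q_nonneg: "\<And>x. 0 \<le> q x"
    and q_norm: "(\<integral>\<^sup>+x. ennreal (q x) \<partial>lborel) = 1"
    and V[measurable]: "V \<in> borel_measurable borel" and V_ge1: "\<And>x. 1 \<le> V x"
    and p_moment: "(\<integral>\<^sup>+x. ennreal ((V x)\<^sup>2 * p x) \<partial>lborel) \<le> ennreal C"
    and q_moment: "(\<integral>\<^sup>+x. ennreal ((V x)\<^sup>2 * q x) \<partial>lborel) \<le> ennreal C"
    and C: "0 < C"
  shows "vbound V borel (density lborel p) (density lborel q) (2 * sqrt C * hellinger q p)"
  unfolding vbound_def
proof (intro ballI impI conjI)
  have int_p: "integrable lborel p" and int_q: "integrable lborel q"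
    using nn_integral_eq_integrable[of p lborel 1] nn_integral_eq_integrable[of q lborel 1]
      p_norm q_norm p_nonneg q_nonneg by auto
  have V2[measurable]: "(\<lambda>x. (V x)\<^sup>2) \<in> borel_measurable borel" by measurable
  note Vp = integrable_weighted_density[OF p p_nonneg V2 zero_le_power2 p_moment less_imp_le[OF C]]
  note Vq = integrable_weighted_density[OF q q_nonneg V2 zero_le_power2 q_moment less_imp_le[OF C]]
  define h where "h x = (sqrt (q x) - sqrt (p x))\<^sup>2" for x
  have int_h: "integrable lborel h" and integral_h: "(\<integral>x. h x \<partial>lborel) = (hellinger q p)\<^sup>2"
    using hellinger_integrand[OF p q p_nonneg q_nonneg int_p int_q] unfolding h_def by simp_all
  fix f :: "'a \<Rightarrow> real"
  assume f[measurable]: "f \<in> borel_measurable borel" and "\<forall>x\<in>space borel. \<bar>f x\<bar> \<le> V x"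
  then have fV: "\<And>x. \<bar>f x\<bar> \<le> V x" by simp
  note fp = integrable_test_density[OF p p_nonneg Vp(1) V_ge1 f fV]
  note fq = integrable_test_density[OF q q_nonneg Vq(1) V_ge1 f fV]
  show "integrable (density lborel p) f" "integrable (density lborel q) f"
    using fp fq by simp_all
  define D where "D = \<bar>(\<integral>x. f x \<partial>density lborel p) - (\<integral>x. f x \<partial>density lborel q)\<bar>"
  (* Integrate the pointwise AM-GM estimate for each weight l, then optimise over l. *)
  have "D \<le> 2 * l * C + (hellinger q p)\<^sup>2 / (2 * l)" if l: "0 < l" for l
  proof -
    have int_diff: "integrable lborel (\<lambda>x. f x * (p x - q x))"
      using fp(1) fq(1) by (simp add: right_diff_distrib mult.commute)
    have "(\<integral>x. p x * f x \<partial>lborel) - (\<integral>x. q x * f x \<partial>lborel) = (\<integral>x. f x * (p x - q x) \<partial>lborel)"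
      using Bochner_Integration.integral_diff[OF fp(1) fq(1)] by (simp add: algebra_simps)
    then have "D = \<bar>\<integral>x. f x * (p x - q x) \<partial>lborel\<bar>"
      unfolding D_def using fp(3) fq(3) by simp
    also have "\<dots> \<le> (\<integral>x. \<bar>f x * (p x - q x)\<bar> \<partial>lborel)"
      by (rule integral_abs_bound)
    also have "\<dots> \<le> (\<integral>x. l * ((V x)\<^sup>2 * p x + (V x)\<^sup>2 * q x) + h x / (2 * l) \<partial>lborel)"
    proof (rule integral_mono)
      show "integrable lborel (\<lambda>x. \<bar>f x * (p x - q x)\<bar>)" using int_diff by simp
      show "integrable lborel (\<lambda>x. l * ((V x)\<^sup>2 * p x + (V x)\<^sup>2 * q x) + h x / (2 * l))"
        using Vp(1) Vq(1) int_h by simp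
      fix x
      have "\<bar>f x * ((sqrt (p x))\<^sup>2 - (sqrt (q x))\<^sup>2)\<bar>
          \<le> l * ((V x)\<^sup>2 * (sqrt (p x))\<^sup>2 + (V x)\<^sup>2 * (sqrt (q x))\<^sup>2) + (sqrt (q x) - sqrt (p x))\<^sup>2 / (2 * l)"
        using fV l p_nonneg q_nonneg by (intro abs_mult_diff_squares_le) auto
      then show "\<bar>f x * (p x - q x)\<bar> \<le> l * ((V x)\<^sup>2 * p x + (V x)\<^sup>2 * q x) + h x / (2 * l)"
        using p_nonneg[of x] q_nonneg[of x] by (simp add: h_def)
    qed
    also have "\<dots> = l * ((\<integral>x. (V x)\<^sup>2 * p x \<partial>lborel) + (\<integral>x. (V x)\<^sup>2 * q x \<partial>lborel))
        + (\<integral>x. h x \<partial>lborel) / (2 * l)"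
      using Vp(1) Vq(1) int_h by simp
    also have "\<dots> \<le> l * (C + C) + (hellinger q p)\<^sup>2 / (2 * l)"
      using Vp(2) Vq(2) l integral_h by (simp add: add_mono)
    finally show ?thesis by simp
  qed
  then show "\<bar>(\<integral>x. f x \<partial>density lborel p) - (\<integral>x. f x \<partial>density lborel q)\<bar> \<le> 2 * sqrt C * hellinger q p"
    unfolding D_def by (intro le_of_tradeoff C) (auto simp: hellinger_def)
qed

lemma error_sum_Suc:
  fixes c a :: "nat \<Rightarrow> real"
  shows "(\<Sum>s = 1..Suc t. (\<Prod>u = s..Suc t. c u) * a s)
    = c (Suc t) * ((\<Sum>s = 1..t. (\<Prod>u = s..t. c u) * a s) + a (Suc t))"
proof -
  have "(\<Sum>s = 1..t. (\<Prod>u = s..Suc t. c u) * a s) = c (Suc t) * (\<Sum>s = 1..t. (\<Prod>u = s..t. c u) * a s)"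
    by (simp add: sum_distrib_left algebra_simps)
  then show ?thesis by (simp add: algebra_simps)
qed

lemma law_vbound:
  fixes \<pi> :: "nat \<Rightarrow> 'a::euclidean_space \<Rightarrow> real" and V :: "'a \<Rightarrow> real"
  assumes dens: "\<And>t. density lborel (\<pi> t) \<in> space (prob_algebra borel)"
    and kernel: "\<And>t. 1 \<le> t \<Longrightarrow> T t \<in> borel \<rightarrow>\<^sub>M prob_algebra borel"
    and stationary: "\<And>t. 1 \<le> t \<Longrightarrow> density lborel (\<pi> t) \<bind> T t = density lborel (\<pi> t)"
    and V: "V \<in> borel_measurable borel" and V_nonneg: "\<And>x. 0 \<le> V x"
    and \<rho>: "\<And>t. 1 \<le> t \<Longrightarrow> 0 < \<rho> t"
    and drift: "\<And>t x. 1 \<le> t \<Longrightarrow> vbound V borel (T t x) (density lborel (\<pi> t)) (\<rho> t * V x)"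
    and shift: "\<And>t. vbound V borel (density lborel (\<pi> t)) (density lborel (\<pi> (Suc t))) (\<alpha> (Suc t))"
    and start: "vbound V borel (density lborel (\<pi> 0)) (density lborel (\<pi> 0)) 0"
  shows "law \<pi> T m t \<in> space (prob_algebra borel) \<and>
    vbound V borel (law \<pi> T m t) (density lborel (\<pi> t)) (\<Sum>s = 1..t. (\<Prod>u = s..t. \<rho> u ^ m u) * \<alpha> s)"
proof (induction t)
  case 0
  show ?case using dens start by simp
next
  case (Suc t)
  have stage: "1 \<le> Suc t" by simp
  let ?e = "\<Sum>s = 1..t. (\<Prod>u = s..t. \<rho> u ^ m u) * \<alpha> s"
  have "vbound V borel (law \<pi> T m t) (density lborel (\<pi> (Suc t))) (?e + \<alpha> (Suc t))"
    using vbound_trans[OF _ shift] Suc.IH by blast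
  then have "vbound V borel (law \<pi> T m (Suc t)) (density lborel (\<pi> (Suc t)))
      (\<rho> (Suc t) ^ m (Suc t) * (?e + \<alpha> (Suc t)))"
    using vbound_kpow_contract[OF kernel[OF stage] dens stationary[OF stage] V V_nonneg \<rho>[OF stage]
        drift[OF stage]] Suc.IH
    by simp
  moreover have "law \<pi> T m (Suc t) \<in> space (prob_algebra borel)"
    using bind_in_prob_algebra[OF _ kpow_measurable[OF kernel[OF stage]]] Suc.IH by simp
  ultimately show ?case by (simp only: error_sum_Suc)
qed

theorem theorem4:
  fixes \<pi> :: "nat \<Rightarrow> 'a::euclidean_space \<Rightarrow> real"
    and T :: "nat \<Rightarrow> 'a \<Rightarrow> 'a measure"
    and m :: "nat \<Rightarrow> nat"
    and V :: "'a \<Rightarrow> real"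
    and C :: real
    and \<rho> :: "nat \<Rightarrow> real"
  assumes dens_meas: "\<And>t. \<pi> t \<in> borel_measurable borel"
    and dens_nonneg: "\<And>t x. \<pi> t x \<ge> 0"
    and dens_norm: "\<And>t. (\<integral>\<^sup>+x. ennreal (\<pi> t x) \<partial>lborel) = 1"
    and kernel: "\<And>t. t \<ge> 1 \<Longrightarrow> T t \<in> borel \<rightarrow>\<^sub>M prob_algebra borel"
    and stationary: "\<And>t. t \<ge> 1 \<Longrightarrow> bind (density lborel (\<pi> t)) (T t) = density lborel (\<pi> t)"
    and m_pos: "\<And>t. t \<ge> 1 \<Longrightarrow> m t \<ge> 1"
    and V_meas: "V \<in> borel_measurable borel"
    and V_ge1: "\<And>x. V x \<ge> 1"
    and C_pos: "C > 0"
    and rho: "\<And>t. t \<ge> 1 \<Longrightarrow> 0 < \<rho> t \<and> \<rho> t < 1"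
    and V2_int: "\<And>t. (\<integral>\<^sup>+x. ennreal ((V x)\<^sup>2 * \<pi> t x) \<partial>lborel) \<le> ennreal C"
    and drift: "\<And>t x. t \<ge> 1 \<Longrightarrow> vnorm V (T t x) (density lborel (\<pi> t)) \<le> ereal (V x * \<rho> t)"
    and t_pos: "t \<ge> 1"
  shows "tvnorm (law \<pi> T m t) (density lborel (\<pi> t))
           \<le> ereal (\<Sum>s = 1..t. (\<Prod>u = s..t. \<rho> u ^ m u)
                         * (2 * sqrt C * hellinger (\<pi> s) (\<pi> (s - 1))))"
proof -
  have V_nonneg: "\<And>x. 0 \<le> V x" using V_ge1 by (meson order_trans zero_le_one)
  note hellinger_step = vbound_density_hellinger[OF dens_meas dens_nonneg dens_norm
      dens_meas dens_nonneg dens_norm V_meas V_ge1 V2_int V2_int C_pos]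
  have drift_bound: "vbound V borel (T t x) (density lborel (\<pi> t)) (\<rho> t * V x)" if "1 \<le> t" for t x
  proof (rule vbound_of_vnorm)
    show "sets (T t x) = sets borel"
      using measurable_space[OF kernel[OF that]] by (simp add: space_prob_algebra)
    show "vnorm V (T t x) (density lborel (\<pi> t)) \<le> ereal (\<rho> t * V x)"
      using drift[OF that] by (simp add: mult.commute)
  qed
  have "law \<pi> T m t \<in> space (prob_algebra borel) \<and> vbound V borel (law \<pi> T m t) (density lborel (\<pi> t))
      (\<Sum>s = 1..t. (\<Prod>u = s..t. \<rho> u ^ m u) * (2 * sqrt C * hellinger (\<pi> s) (\<pi> (s - 1))))"
  proof (rule law_vbound[where \<alpha> = "\<lambda>s. 2 * sqrt C * hellinger (\<pi> s) (\<pi> (s - 1))",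
        OF density_in_prob_algebra[OF dens_meas dens_norm] kernel stationary V_meas V_nonneg _ drift_bound])
    show "0 < \<rho> t" if "1 \<le> t" for t using rho[OF that] by blast
    show "vbound V borel (density lborel (\<pi> t)) (density lborel (\<pi> (Suc t)))
        (2 * sqrt C * hellinger (\<pi> (Suc t)) (\<pi> (Suc t - 1)))" for t
      using hellinger_step by simp
    show "vbound V borel (density lborel (\<pi> 0)) (density lborel (\<pi> 0)) 0"
      using hellinger_step[of 0 0] by (simp add: hellinger_def)
  qed
  then show ?thesis
    using tvnorm_of_vbound[of _ borel V] V_ge1 by (auto simp: space_prob_algebra)
qed

end
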